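(* Let $\frac12\le M<\frac23$ and consider Algorithm C on an input whose optimal offline makespan is $1$. If job $j$ is handled by Step 5, then with $\gamma_j=y_{j-1}+p_j-(2-M)$ the chosen set $W$ satisfies $\gamma_j\le w_j\le M\cdot p_j$.
   Context: Model (two hierarchical machines with migration, bin stretching). Jobs $1,2,\dots,n$ arrive one by one. Job $j$ has a size $p_j>0$ and a grade of service (GoS) $g_j\in\{1,2\}$; a job of GoS $1$ may only be processed on machine $m_1$, a job of GoS $2$ may be processed on $m_1$ or on $m_2$. When job $j$ arrives, the algorithm must assign it, and may migrate previously arrived jobs (respecting GoS) of total size at most $M\cdot p_j$. The optimal offline makespan of the complete input is known in advance and scaled to $1$. Notation: $Y_{j}$ is the set of jobs on $m_2$ just after job $j$ has been handled, $y_j$ its total size, $y_0=0$; $p^{\max Y}_j$ is the largest size of a job in $Y_{j-1}$ ($0$ if empty); "sorted $Y_{j-1}$" lists $Y_{j-1}$ in non-increasing order of size; $w_j$ is the total size of the chosen set $W$. Algorithm C (parameter $M$). On arrival of job $j$: Step 2: if $g_j=1$ or $y_{j-1}\ge M$, assign $j$ to $m_1$. Step 3: else if $y_{j-1}+p_j\le 2-M$, assign $j$ to $m_2$. Step 4: else if $p^{\max Y}_j>M\cdot p_j$, assign $j$ to $m_1$. Step 5: otherwise let $W$ be the shortest prefix of sorted $Y_{j-1}$ with total size at least $p_j+y_{j-1}-(2-M)$ (or $W=Y_{j-1}$ if none exists); migrate the jobs of $W$ to $m_1$ and assign $j$ to $m_2$. *)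

theory Defs
  imports Main "HOL-Library.Multiset" Complex_Main
begin

text \<open>Jobs are indexed 1..n; job j has size p j and GoS g j (1 or 2).
  Machine m1 is encoded as 1, machine m2 as 2.\<close>

definition valid_input :: "nat \<Rightarrow> (nat \<Rightarrow> real) \<Rightarrow> (nat \<Rightarrow> nat) \<Rightarrow> bool" where
  "valid_input n p g \<longleftrightarrow> (\<forall>j\<in>{1..n}. p j > 0 \<and> g j \<in> {1,2})"

definition valid_schedule :: "nat \<Rightarrow> (nat \<Rightarrow> nat) \<Rightarrow> (nat \<Rightarrow> nat) \<Rightarrow> bool" where
  "valid_schedule n g \<sigma> \<longleftrightarrow> (\<forall>j\<in>{1..n}. \<sigma> j \<in> {1,2} \<and> (g j = 1 \<longrightarrow> \<sigma> j = 1))"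

definition load :: "nat \<Rightarrow> (nat \<Rightarrow> real) \<Rightarrow> (nat \<Rightarrow> nat) \<Rightarrow> nat \<Rightarrow> real" where
  "load n p \<sigma> i = (\<Sum>j\<in>{j\<in>{1..n}. \<sigma> j = i}. p j)"

definition makespan :: "nat \<Rightarrow> (nat \<Rightarrow> real) \<Rightarrow> (nat \<Rightarrow> nat) \<Rightarrow> real" where
  "makespan n p \<sigma> = max (load n p \<sigma> 1) (load n p \<sigma> 2)"

definition opt_is_one :: "nat \<Rightarrow> (nat \<Rightarrow> real) \<Rightarrow> (nat \<Rightarrow> nat) \<Rightarrow> bool" where
  "opt_is_one n p g \<longleftrightarrow>
     (\<exists>\<sigma>. valid_schedule n g \<sigma> \<and> makespan n p \<sigma> = 1) \<and>
     (\<forall>\<sigma>. valid_schedule n g \<sigma> \<longrightarrow> makespan n p \<sigma> \<ge> 1)"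

definition pmax :: "(nat \<Rightarrow> real) \<Rightarrow> nat set \<Rightarrow> real" where
  "pmax p Y = (if Y = {} then 0 else Max (p ` Y))"

definition sorted_listing :: "(nat \<Rightarrow> real) \<Rightarrow> nat set \<Rightarrow> nat list \<Rightarrow> bool" where
  "sorted_listing p Y L \<longleftrightarrow> distinct L \<and> set L = Y \<and> sorted_wrt (\<lambda>a b. p a \<ge> p b) L"

definition prefix_choice :: "(nat \<Rightarrow> real) \<Rightarrow> nat list \<Rightarrow> real \<Rightarrow> nat set" where
  "prefix_choice p L t =
     (if \<exists>k\<le>length L. sum_list (map p (take k L)) \<ge> t
      then set (take (LEAST k. k \<le> length L \<and> sum_list (map p (take k L)) \<ge> t) L)
      else set L)"

text \<open>Step 5 applies to job j = Suc i when Y is the content of m2 after job i.\<close>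
definition step5_applies :: "real \<Rightarrow> (nat \<Rightarrow> real) \<Rightarrow> (nat \<Rightarrow> nat) \<Rightarrow> nat \<Rightarrow> nat set \<Rightarrow> bool" where
  "step5_applies M p g j Y \<longleftrightarrow>
     \<not> (g j = 1 \<or> sum p Y \<ge> M) \<and> \<not> (sum p Y + p j \<le> 2 - M) \<and> \<not> (pmax p Y > M * p j)"

text \<open>Possible contents Y of machine m2 after job j has been handled by Algorithm C
  (over all tie-breaking choices in sorting).\<close>
inductive alg_state :: "real \<Rightarrow> (nat \<Rightarrow> real) \<Rightarrow> (nat \<Rightarrow> nat) \<Rightarrow> nat \<Rightarrow> nat set \<Rightarrow> bool"
  for M p g where
  init: "alg_state M p g 0 {}"
| step2: "alg_state M p g j Y \<Longrightarrow> g (Suc j) = 1 \<or> sum p Y \<ge> M \<Longrightarrow>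
          alg_state M p g (Suc j) Y"
| step3: "alg_state M p g j Y \<Longrightarrow> \<not> (g (Suc j) = 1 \<or> sum p Y \<ge> M) \<Longrightarrow>
          sum p Y + p (Suc j) \<le> 2 - M \<Longrightarrow>
          alg_state M p g (Suc j) (insert (Suc j) Y)"
| step4: "alg_state M p g j Y \<Longrightarrow> \<not> (g (Suc j) = 1 \<or> sum p Y \<ge> M) \<Longrightarrow>
          \<not> (sum p Y + p (Suc j) \<le> 2 - M) \<Longrightarrow> pmax p Y > M * p (Suc j) \<Longrightarrow>
          alg_state M p g (Suc j) Y"
| step5: "alg_state M p g j Y \<Longrightarrow> step5_applies M p g (Suc j) Y \<Longrightarrow>
          sorted_listing p Y L \<Longrightarrow>
          alg_state M p g (Suc j)
            (insert (Suc j) (Y - prefix_choice p L (p (Suc j) + sum p Y - (2 - M))))"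

end

theory Submission
  imports Defs
begin

text \<open>Write y for the load of m2 before job j and \<gamma> = y + p_j - (2 - M). Every job has
  size at most the optimal makespan 1 < 2 - M, so \<gamma> < y and a prefix of the sorted listing
  of total size at least \<gamma> exists; the shortest one gives w_j \<ge> \<gamma>. If it is a single job,
  w_j \<le> pmax \<le> M p_j because Step 4 did not apply. Otherwise its last job is no larger than
  its first, hence no larger than the rest of the prefix, whose total is below \<gamma> by
  minimality; so w_j < 2\<gamma>, and 2\<gamma> \<le> M p_j follows from y < M and p_j \<le> 1.\<close>

lemma alg_state_subset: "alg_state M p g i Y \<Longrightarrow> Y \<subseteq> {1..i}"
  by (induction rule: alg_state.induct) auto

lemma job_size_le_one:
  assumes "valid_input n p g" "opt_is_one n p g" "j \<in> {1..n}"
  shows "p j \<le> 1"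
proof -
  obtain \<sigma> where \<sigma>: "valid_schedule n g \<sigma>" "makespan n p \<sigma> = 1"
    using assms(2) unfolding opt_is_one_def by blast
  have "\<sigma> j \<in> {1, 2}"
    using \<sigma>(1) assms(3) unfolding valid_schedule_def by auto
  then have "load n p \<sigma> (\<sigma> j) \<le> 1"
    using \<sigma>(2) unfolding makespan_def by auto
  moreover have "p j \<le> load n p \<sigma> (\<sigma> j)"
    unfolding load_def
    by (rule member_le_sum) (use assms(1,3) in \<open>auto simp: valid_input_def less_imp_le\<close>)
  ultimately show ?thesis by linarith
qed

lemma prefix_choice_least_prefix:
  assumes "sorted_listing p Y L" "t \<le> sum p Y"
  obtains k where "k \<le> length L"
    and "sum p (prefix_choice p L t) = sum_list (map p (take k L))"
    and "t \<le> sum_list (map p (take k L))"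
    and "\<And>i. i < k \<Longrightarrow> sum_list (map p (take i L)) < t"
proof -
  let ?P = "\<lambda>k. k \<le> length L \<and> t \<le> sum_list (map p (take k L))"
  define k where "k = (LEAST k. ?P k)"
  have distinct: "distinct L" and set: "set L = Y"
    using assms(1) unfolding sorted_listing_def by auto
  have "?P (length L)"
    using assms(2) sum_list_distinct_conv_sum_set[OF distinct, of p] set by simp
  then have ex: "\<exists>k\<le>length L. t \<le> sum_list (map p (take k L))" by blast
  have "?P k"
    unfolding k_def by (rule LeastI_ex) (use ex in blast)
  moreover have "prefix_choice p L t = set (take k L)"
    using ex unfolding prefix_choice_def k_def by simp
  moreover have "\<And>i. i < k \<Longrightarrow> sum_list (map p (take i L)) < t"
    using not_less_Least[of _ ?P] \<open>?P k\<close> unfolding k_def[symmetric] by fastforce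
  moreover have "sum p (set (take k L)) = sum_list (map p (take k L))"
    using sum_list_distinct_conv_sum_set[of "take k L" p] distinct by simp
  ultimately show thesis
    by (intro that[of k]) auto
qed

lemma prefix_choice_le_max:
  assumes "sorted_listing p Y L" "t \<le> sum p Y"
    and bounded: "\<And>y. y \<in> Y \<Longrightarrow> 0 \<le> p y \<and> p y \<le> b" and "0 \<le> b"
  shows "sum p (prefix_choice p L t) \<le> max b (2 * t)"
proof -
  have set: "set L = Y" and sorted: "sorted_wrt (\<lambda>a b. p b \<le> p a) L"
    using assms(1) unfolding sorted_listing_def by auto
  obtain k where k: "k \<le> length L"
    and sum_eq: "sum p (prefix_choice p L t) = sum_list (map p (take k L))"
    and shorter: "\<And>i. i < k \<Longrightarrow> sum_list (map p (take i L)) < t"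
    using prefix_choice_least_prefix[OF assms(1,2)] by blast
  consider "k = 0" | "k = 1" | "2 \<le> k" by linarith
  then show ?thesis
  proof cases
    case 1
    then show ?thesis using sum_eq \<open>0 \<le> b\<close> by simp
  next
    case 2
    then have "L \<noteq> []" using k by auto
    then have "take k L = [L ! 0]" and "L ! 0 \<in> Y"
      using 2 set by (auto simp: neq_Nil_conv)
    then show ?thesis using sum_eq bounded[of "L ! 0"] by (simp add: le_max_iff_disj)
  next
    case 3
    have split: "take k L = take (k - 1) L @ [L ! (k - 1)]"
      using k 3 take_Suc_conv_app_nth[of "k - 1" L] by simp
    have "p (L ! (k - 1)) \<le> p (L ! 0)"
      using sorted_wrt_nth_less[OF sorted, of 0 "k - 1"] k 3 by simp
    also have "\<dots> \<le> sum_list (map p (take (k - 1) L))"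
    proof (rule member_le_sum_list)
      have "take (k - 1) L ! 0 \<in> set (take (k - 1) L)"
        using k 3 by (intro nth_mem) simp
      then show "p (L ! 0) \<in> set (map p (take (k - 1) L))"
        using 3 by simp
      show "\<And>x. x \<in> set (map p (take (k - 1) L)) \<Longrightarrow> 0 \<le> x"
        using bounded set by (auto dest: in_set_takeD)
    qed
    finally have "sum_list (map p (take k L)) \<le> 2 * sum_list (map p (take (k - 1) L))"
      using split by simp
    also have "\<dots> < 2 * t"
      using shorter[of "k - 1"] 3 by simp
    finally show ?thesis using sum_eq by simp
  qed
qed

theorem mainTheorem11:
  fixes M :: real and n :: nat and p :: "nat \<Rightarrow> real" and g :: "nat \<Rightarrow> nat"
    and j :: nat and Y :: "nat set" and L :: "nat list"
  assumes "1/2 \<le> M" and "M < 2/3"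
    and "valid_input n p g"
    and "opt_is_one n p g"
    and "j \<in> {1..n}"
    and "alg_state M p g (j - 1) Y"
    and "step5_applies M p g j Y"
    and "sorted_listing p Y L"
  shows "sum p Y + p j - (2 - M) \<le> sum p (prefix_choice p L (p j + sum p Y - (2 - M)))
       \<and> sum p (prefix_choice p L (p j + sum p Y - (2 - M))) \<le> M * p j"
proof -
  define t where "t = p j + sum p Y - (2 - M)"
  have "p j \<le> 1" using job_size_le_one assms(3-5) .
  have step5: "sum p Y < M" "pmax p Y \<le> M * p j"
    using assms(7) unfolding step5_applies_def by auto
  have "{1..j - 1} \<subseteq> {1..n}" using assms(5) by auto
  then have "Y \<subseteq> {1..n}" using alg_state_subset[OF assms(6)] by blast
  then have "finite Y" and positive: "\<And>y. y \<in> Y \<Longrightarrow> 0 < p y"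
    using assms(3) finite_subset unfolding valid_input_def by auto
  have "\<And>y. y \<in> Y \<Longrightarrow> p y \<le> M * p j"
    using step5(2) \<open>finite Y\<close> unfolding pmax_def by (auto split: if_splits)
  moreover have "0 \<le> M * p j"
    using assms(1,3,5) unfolding valid_input_def by (simp add: less_imp_le)
  moreover have "t \<le> sum p Y" using \<open>p j \<le> 1\<close> assms(2) unfolding t_def by simp
  ultimately have "sum p (prefix_choice p L t) \<le> max (M * p j) (2 * t)"
    using prefix_choice_le_max[OF assms(8), of t "M * p j"] positive less_imp_le by blast
  moreover have "2 * t \<le> M * p j"
    using step5(1) \<open>p j \<le> 1\<close> assms(2) mult_right_mono[OF \<open>p j \<le> 1\<close>, of "2 - M"]
    unfolding t_def by (simp add: algebra_simps)
  moreover have "t \<le> sum p (prefix_choice p L t)"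
    using prefix_choice_least_prefix[OF assms(8) \<open>t \<le> sum p Y\<close>] by metis
  ultimately show ?thesis unfolding t_def by (simp add: algebra_simps)
qed

end
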